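(* Let $z\in\mathbb{D}^*$ and suppose that there are points $p\in f\Lambda_z$ and $q\in g\Lambda_z$ with $|p-q|=\delta$. Then the closed $\delta/2$-neighbourhood $\{x\in\mathbb{C}:d(x,\Lambda_z)\le\delta/2\}$ of $\Lambda_z$ is path connected.
   Context: For $z\in\mathbb{D}^*=\{0<|z|<1\}$, $f(x)=zx$, $g(x)=z(x-1)+1$, $\Lambda_z$ is the unique nonempty compact subset of $\mathbb{C}$ with $\Lambda_z=f(\Lambda_z)\cup g(\Lambda_z)$, and $f\Lambda_z=f(\Lambda_z)$, $g\Lambda_z=g(\Lambda_z)$. *)

theory Defs
  imports "HOL-Analysis.Analysis"
begin

definition ifs_f :: "complex \<Rightarrow> complex \<Rightarrow> complex" where
  "ifs_f z x = z * x"

definition ifs_g :: "complex \<Rightarrow> complex \<Rightarrow> complex" where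
  "ifs_g z x = z * (x - 1) + 1"

definition Lambda :: "complex \<Rightarrow> complex set" where
  "Lambda z = (THE K. K \<noteq> {} \<and> compact K \<and> K = ifs_f z ` K \<union> ifs_g z ` K)"

end

theory Submission
  imports Defs
begin

text \<open>Both maps are contractions by the factor \<open>|z| < 1\<close>, and \<open>\<Lambda> = f \<Lambda> \<union> g \<Lambda>\<close>. Join two points
  \<open>a, b\<close> of \<open>\<Lambda>\<close> by the segment, and refine a family of joining paths self-similarly: if \<open>a\<close>
  and \<open>b\<close> lie in the same piece \<open>h \<Lambda>\<close>, use the image under \<open>h\<close> of the path between their
  preimages; otherwise go from \<open>a\<close> to \<open>p\<close> inside \<open>f \<Lambda>\<close>, along the segment \<open>[p, q]\<close>, and
  from \<open>q\<close> to \<open>b\<close> inside \<open>g \<Lambda>\<close>. Each refinement moves the paths by a geometrically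
  decreasing amount, so they converge uniformly to a path. The segment \<open>[p, q]\<close> lies in the
  \<open>\<delta>/2\<close>-neighbourhood, and everything else is an image of the previous stage, so the
  distance to \<open>\<Lambda>\<close> along the limit path is at most \<open>\<delta>/2\<close>. Every point of the neighbourhood
  is joined to \<open>\<Lambda>\<close> by a segment to a nearest point.\<close>

lemma INT_Un_decseq:
  fixes A B :: "nat \<Rightarrow> 'a set"
  assumes "decseq A" and "decseq B"
  shows "(\<Inter>n. A n \<union> B n) = (\<Inter>n. A n) \<union> (\<Inter>n. B n)"
proof
  show "(\<Inter>n. A n \<union> B n) \<subseteq> (\<Inter>n. A n) \<union> (\<Inter>n. B n)"
  proof
    fix x assume x: "x \<in> (\<Inter>n. A n \<union> B n)"
    show "x \<in> (\<Inter>n. A n) \<union> (\<Inter>n. B n)"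
    proof (rule ccontr)
      assume "x \<notin> (\<Inter>n. A n) \<union> (\<Inter>n. B n)"
      then obtain m k where "x \<notin> A m" "x \<notin> B k" by blast
      then have "x \<notin> A (max m k) \<union> B (max m k)"
        using decseqD[OF assms(1), of m "max m k"] decseqD[OF assms(2), of k "max m k"] by auto
      with x show False by blast
    qed
  qed
qed blast

lemma infdist_linepath_le:
  fixes a b :: "'a::real_normed_vector"
  assumes "a \<in> A" "b \<in> A" "t \<in> {0..1}"
  shows "infdist (linepath a b t) A \<le> dist a b / 2"
proof (cases "t \<le> 1/2")
  case True
  have "infdist (linepath a b t) A \<le> dist (linepath a b t) a" by (rule infdist_le[OF assms(1)])
  also have "\<dots> = t * dist a b"
    using assms(3) by (simp add: linepath_def dist_norm algebra_simps norm_minus_commute flip: scaleR_diff_right)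
  also have "\<dots> \<le> dist a b / 2" using mult_right_mono[OF True zero_le_dist[of a b]] by simp
  finally show ?thesis .
next
  case False
  have "infdist (linepath a b t) A \<le> dist (linepath a b t) b" by (rule infdist_le[OF assms(2)])
  also have "\<dots> = (1 - t) * dist a b"
  proof -
    have "linepath a b t - b = (1 - t) *\<^sub>R (a - b)" by (simp add: linepath_def algebra_simps)
    then show ?thesis using assms(3) by (simp add: dist_norm)
  qed
  also have "\<dots> \<le> dist a b / 2" using mult_right_mono[of "1 - t" "1/2" "dist a b"] False by simp
  finally show ?thesis .
qed

lemma dist_le_infdist_diameter:
  fixes K :: "'a::heine_borel set"
  assumes "compact K" "K \<noteq> {}"
  shows "dist x y \<le> infdist x K + diameter K + infdist y K"
proof -
  have "closed K" using assms(1) by (rule compact_imp_closed)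
  obtain u where u: "u \<in> K" "infdist x K = dist x u" using infdist_attains_inf[OF \<open>closed K\<close> assms(2)] by blast
  obtain v where v: "v \<in> K" "infdist y K = dist y v" using infdist_attains_inf[OF \<open>closed K\<close> assms(2)] by blast
  have "dist u v \<le> diameter K" using diameter_bounded_bound[OF compact_imp_bounded[OF assms(1)] u(1) v(1)] .
  then show ?thesis using u v dist_triangle[of x y u] dist_triangle[of u y v] by (simp add: dist_commute)
qed

lemma infdist_lipschitz_image_le:
  fixes K :: "'a::heine_borel set"
  assumes "r-lipschitz_on UNIV h" "h ` K \<subseteq> K" "closed K" "K \<noteq> {}"
  shows "infdist (h x) K \<le> r * infdist x K"
proof -
  obtain w where w: "w \<in> K" "infdist x K = dist x w" using infdist_attains_inf[OF assms(3,4)] by blast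
  have "infdist (h x) K \<le> dist (h x) (h w)" using assms(2) w(1) by (intro infdist_le) blast
  also have "\<dots> \<le> r * dist x w" using lipschitz_onD[OF assms(1)] by simp
  finally show ?thesis using w by simp
qed

lemma lipschitz_image_cball_subset:
  fixes h :: "'a::real_normed_vector \<Rightarrow> 'a"
  assumes "r-lipschitz_on UNIV h" "norm (h 0) \<le> (1 - r) * R"
  shows "h ` cball 0 R \<subseteq> cball 0 R"
proof
  fix y assume "y \<in> h ` cball 0 R"
  then obtain x where x: "norm x \<le> R" "y = h x" by auto
  have "norm (h x) \<le> norm (h 0) + dist (h x) (h 0)" by (metis dist_norm norm_triangle_sub)
  also have "\<dots> \<le> norm (h 0) + r * norm x" using lipschitz_onD[OF assms(1), of x 0] by simp
  also have "\<dots> \<le> norm (h 0) + r * R" using x(1) lipschitz_on_nonneg[OF assms(1)] by (simp add: mult_left_mono)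
  finally show "y \<in> cball 0 R" using x(2) assms(2) by (simp add: algebra_simps)
qed

lemma joinpaths_pointwise:
  assumes "\<forall>s\<in>{0..1}. P (\<gamma>\<^sub>1 s) (\<eta>\<^sub>1 s)" "\<forall>s\<in>{0..1}. P (\<gamma>\<^sub>2 s) (\<eta>\<^sub>2 s)" "t \<in> {0..1}"
  shows "P ((\<gamma>\<^sub>1 +++ \<gamma>\<^sub>2) t) ((\<eta>\<^sub>1 +++ \<eta>\<^sub>2) t)"
  using assms by (auto simp: joinpaths_def)

lemma uniform_limit_summable_dist_Suc:
  fixes h :: "nat \<Rightarrow> 'a \<Rightarrow> 'b::banach"
  assumes "\<And>n x. x \<in> A \<Longrightarrow> dist (h (Suc n) x) (h n x) \<le> M n" "summable M"
  shows "\<exists>l. uniform_limit A h l sequentially"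
proof -
  have telescope: "h n x = h 0 x + (\<Sum>i<n. h (Suc i) x - h i x)" for n x
    by (simp add: sum_lessThan_telescope[of "\<lambda>i. h i x"])
  have "uniform_limit A (\<lambda>n x. \<Sum>i<n. h (Suc i) x - h i x) (\<lambda>x. \<Sum>i. h (Suc i) x - h i x) sequentially"
    using assms by (intro Weierstrass_m_test) (simp_all add: dist_norm)
  then have "uniform_limit A (\<lambda>n x. h 0 x + (\<Sum>i<n. h (Suc i) x - h i x)) (\<lambda>x. h 0 x + (\<Sum>i. h (Suc i) x - h i x)) sequentially"
    by (intro uniform_limit_intros)
  then show ?thesis unfolding telescope[symmetric] by blast
qed

lemma path_connected_infdist_le:
  fixes K :: "'a::euclidean_space set"
  assumes "closed K" "K \<noteq> {}"
    and "\<And>a b. a \<in> K \<Longrightarrow> b \<in> K \<Longrightarrow> path_component {x. infdist x K \<le> e} a b"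
  shows "path_connected {x. infdist x K \<le> e}"
  unfolding path_connected_component
proof (intro ballI)
  let ?N = "{x. infdist x K \<le> e}"
  have to_K: "\<exists>a\<in>K. path_component ?N x a" if x: "x \<in> ?N" for x
  proof -
    obtain a where a: "a \<in> K" "infdist x K = dist x a" using infdist_attains_inf[OF assms(1,2)] by blast
    have "closed_segment x a \<subseteq> ?N"
    proof
      fix w assume w: "w \<in> closed_segment x a"
      have "dist w a \<le> dist x a" using segment_bound(2)[OF w] by (simp add: dist_norm norm_minus_commute)
      then show "w \<in> ?N" using x a infdist_le2[of a K w e] by auto
    qed
    then show ?thesis using a path_component_linepath by blast
  qed
  fix x y assume "x \<in> ?N" "y \<in> ?N"
  then obtain a b where "a \<in> K" "path_component ?N x a" "b \<in> K" "path_component ?N y b"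
    using to_K by blast
  then show "path_component ?N x y" using assms(3) by (meson path_component_sym path_component_trans)
qed

locale contraction_pair =
  fixes f g :: "'a::euclidean_space \<Rightarrow> 'a" and r :: real
  assumes lipschitz_f: "r-lipschitz_on UNIV f"
    and lipschitz_g: "r-lipschitz_on UNIV g"
    and contraction_factor_less_1: "r < 1"
begin

lemma contraction_factor_nonneg: "0 \<le> r"
  using lipschitz_f by (rule lipschitz_on_nonneg)

lemma dist_f_le: "dist (f x) (f y) \<le> r * dist x y"
  using lipschitz_f by (rule lipschitz_onD) simp_all

lemma dist_g_le: "dist (g x) (g y) \<le> r * dist x y"
  using lipschitz_g by (rule lipschitz_onD) simp_all

lemma continuous_on_f: "continuous_on S f"
  using lipschitz_on_continuous_on[OF lipschitz_f] continuous_on_subset by blast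

lemma continuous_on_g: "continuous_on S g"
  using lipschitz_on_continuous_on[OF lipschitz_g] continuous_on_subset by blast

lemma invariant_compact_subset:
  assumes A: "A \<noteq> {}" "compact A" "A = f ` A \<union> g ` A"
    and B: "B \<noteq> {}" "compact B" "B = f ` B \<union> g ` B"
  shows "A \<subseteq> B"
proof -
  have "closed B" using B(2) by (rule compact_imp_closed)
  have infdist_image: "infdist (f x) B \<le> r * infdist x B" "infdist (g x) B \<le> r * infdist x B" for x
    using B(3) \<open>closed B\<close> B(1) lipschitz_f lipschitz_g
    by (auto intro!: infdist_lipschitz_image_le)
  have "continuous_on A (\<lambda>x. infdist x B)" by (intro continuous_intros)
  then obtain x0 where x0: "x0 \<in> A" "\<And>x. x \<in> A \<Longrightarrow> infdist x B \<le> infdist x0 B"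
    using continuous_attains_sup[OF A(2,1)] by blast
  \<comment> \<open>the farthest point of A from B is the image of a point of A, hence at most r times as far\<close>
  obtain y where "y \<in> A" "x0 = f y \<or> x0 = g y" using x0(1) A(3) by blast
  then have "infdist x0 B \<le> r * infdist x0 B"
    using infdist_image[of y] x0(2)[of y] contraction_factor_nonneg
    by (smt (verit) mult_left_mono)
  then have "infdist x0 B = 0"
    using contraction_factor_less_1 infdist_nonneg[of x0 B] by (smt (verit) mult_le_cancel_right1)
  then have "infdist x B = 0" if "x \<in> A" for x
    using x0(2)[OF that] infdist_nonneg[of x B] by linarith
  then show ?thesis using in_closed_iff_infdist_zero[OF \<open>closed B\<close> B(1)] by blast
qed

lemma invariant_compact_unique:
  assumes "A \<noteq> {}" "compact A" "A = f ` A \<union> g ` A" "B \<noteq> {}" "compact B" "B = f ` B \<union> g ` B"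
  shows "A = B"
  using invariant_compact_subset assms by (metis subset_antisym)

lemma invariant_compact_exists:
  assumes "inj f" "inj g"
  shows "\<exists>K. K \<noteq> {} \<and> compact K \<and> K = f ` K \<union> g ` K"
proof -
  define R where "R = (norm (f 0) + norm (g 0)) / (1 - r)"
  have "(1 - r) * R = norm (f 0) + norm (g 0)"
    using contraction_factor_less_1 by (simp add: R_def)
  then have "0 \<le> R" "norm (f 0) \<le> (1 - r) * R" "norm (g 0) \<le> (1 - r) * R"
    using contraction_factor_less_1 by (simp_all add: R_def)
  then have R: "0 \<le> R" "f ` cball 0 R \<subseteq> cball 0 R" "g ` cball 0 R \<subseteq> cball 0 R"
    using lipschitz_image_cball_subset[OF lipschitz_f] lipschitz_image_cball_subset[OF lipschitz_g] by simp_all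
  define B where "B n = ((\<lambda>S. f ` S \<union> g ` S) ^^ n) (cball 0 R)" for n
  have B_Suc: "B (Suc n) = f ` B n \<union> g ` B n" for n by (simp add: B_def)
  have B_Suc_subset: "B (Suc n) \<subseteq> B n" for n
    by (induction n) (use R in \<open>auto simp: B_Suc B_def[of 0]\<close>)
  then have "decseq B" by (rule decseq_SucI)
  have B_compact_nonempty: "compact (B n) \<and> B n \<noteq> {}" for n
  proof (induction n)
    case 0
    show ?case using R(1) by (simp add: B_def)
  next
    case (Suc n)
    then show ?case
      by (simp add: B_Suc compact_Un compact_continuous_image continuous_on_f continuous_on_g)
  qed
  define K where "K = (\<Inter>n. B n)"
  have "K \<noteq> {}"
    using compact_nest[of B] B_compact_nonempty decseqD[OF \<open>decseq B\<close>] by (simp add: K_def)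
  moreover have "compact K"
    unfolding K_def using B_compact_nonempty by (intro compact_Inter) auto
  moreover have "K = f ` K \<union> g ` K"
  proof -
    have "f ` K \<union> g ` K = (\<Inter>n. f ` B n) \<union> (\<Inter>n. g ` B n)"
      unfolding K_def using image_INT[of f UNIV UNIV B 0] image_INT[of g UNIV UNIV B 0] assms by simp
    also have "\<dots> = (\<Inter>n. f ` B n \<union> g ` B n)"
    proof (rule INT_Un_decseq[symmetric])
      show "decseq (\<lambda>n. f ` B n)" "decseq (\<lambda>n. g ` B n)"
        using \<open>decseq B\<close> by (simp_all add: decseq_def image_mono)
    qed
    also have "\<dots> = K"
      unfolding K_def B_Suc[symmetric] using B_Suc_subset by blast
    finally show ?thesis by simp
  qed
  ultimately show ?thesis by blast
qed

end

locale bridged_attractor = contraction_pair f g r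
  for f g :: "'a::euclidean_space \<Rightarrow> 'a" and r :: real +
  fixes K :: "'a set" and p q :: 'a
  assumes K_nonempty: "K \<noteq> {}" and compact_K: "compact K"
    and K_invariant: "K = f ` K \<union> g ` K"
    and p_in_f_image: "p \<in> f ` K" and q_in_g_image: "q \<in> g ` K"
begin

lemma closed_K: "closed K"
  using compact_K by (rule compact_imp_closed)

lemma g_image_if_not_f_image: "a \<in> K \<Longrightarrow> a \<notin> f ` K \<Longrightarrow> a \<in> g ` K"
  using K_invariant by blast

lemma infdist_f_le: "infdist (f x) K \<le> r * infdist x K"
  using K_invariant closed_K K_nonempty lipschitz_f by (intro infdist_lipschitz_image_le) auto

lemma infdist_g_le: "infdist (g x) K \<le> r * infdist x K"
  using K_invariant closed_K K_nonempty lipschitz_g by (intro infdist_lipschitz_image_le) auto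

definition refine :: "('a \<Rightarrow> 'a \<Rightarrow> real \<Rightarrow> 'a) \<Rightarrow> 'a \<Rightarrow> 'a \<Rightarrow> real \<Rightarrow> 'a" where
  "refine \<Gamma> a b =
    (if a \<in> f ` K \<and> b \<in> f ` K then f \<circ> \<Gamma> (inv_into K f a) (inv_into K f b)
     else if a \<in> f ` K then
       (f \<circ> \<Gamma> (inv_into K f a) (inv_into K f p)) +++ linepath p q +++
       (g \<circ> \<Gamma> (inv_into K g q) (inv_into K g b))
     else if b \<in> f ` K then
       (g \<circ> \<Gamma> (inv_into K g a) (inv_into K g q)) +++ linepath q p +++
       (f \<circ> \<Gamma> (inv_into K f p) (inv_into K f b))
     else g \<circ> \<Gamma> (inv_into K g a) (inv_into K g b))"

lemma refine_cases:
  assumes "a \<in> K" "b \<in> K"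
  obtains
    "\<And>\<Gamma>. refine \<Gamma> a b = f \<circ> \<Gamma> (inv_into K f a) (inv_into K f b)"
      "a \<in> f ` K" "b \<in> f ` K"
  | "\<And>\<Gamma>. refine \<Gamma> a b = (f \<circ> \<Gamma> (inv_into K f a) (inv_into K f p)) +++ linepath p q +++
        (g \<circ> \<Gamma> (inv_into K g q) (inv_into K g b))"
      "a \<in> f ` K" "b \<in> g ` K"
  | "\<And>\<Gamma>. refine \<Gamma> a b = (g \<circ> \<Gamma> (inv_into K g a) (inv_into K g q)) +++ linepath q p +++
        (f \<circ> \<Gamma> (inv_into K f p) (inv_into K f b))"
      "a \<in> g ` K" "b \<in> f ` K"
  | "\<And>\<Gamma>. refine \<Gamma> a b = g \<circ> \<Gamma> (inv_into K g a) (inv_into K g b)"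
      "a \<in> g ` K" "b \<in> g ` K"
  using assms g_image_if_not_f_image unfolding refine_def by metis

lemma refine_path:
  assumes "\<And>a b. a \<in> K \<Longrightarrow> b \<in> K \<Longrightarrow> path (\<Gamma> a b) \<and> pathstart (\<Gamma> a b) = a \<and> pathfinish (\<Gamma> a b) = b"
    and "a \<in> K" "b \<in> K"
  shows "path (refine \<Gamma> a b) \<and> pathstart (refine \<Gamma> a b) = a \<and> pathfinish (refine \<Gamma> a b) = b"
proof -
  have image_path: "path (h \<circ> \<Gamma> (inv_into K h x) (inv_into K h y)) \<and>
      pathstart (h \<circ> \<Gamma> (inv_into K h x) (inv_into K h y)) = x \<and>
      pathfinish (h \<circ> \<Gamma> (inv_into K h x) (inv_into K h y)) = y"
    if "h = f \<or> h = g" "x \<in> h ` K" "y \<in> h ` K" for h x y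
  proof -
    have pre: "inv_into K h x \<in> K" "inv_into K h y \<in> K" "h (inv_into K h x) = x" "h (inv_into K h y) = y"
      using that(2,3) by (simp_all add: inv_into_into f_inv_into_f)
    have "continuous_on S h" for S using that(1) continuous_on_f continuous_on_g by blast
    then show ?thesis
      using assms(1)[OF pre(1,2)] pre(3,4) by (simp add: path_continuous_image pathstart_compose pathfinish_compose)
  qed
  show ?thesis
    using assms(2,3) by (cases rule: refine_cases)
      (use image_path p_in_f_image q_in_g_image in simp_all)
qed

lemma refine_pointwise:
  assumes P_f: "\<And>x y s. x \<in> K \<Longrightarrow> y \<in> K \<Longrightarrow> s \<in> {0..1} \<Longrightarrow> P (f (\<Gamma> x y s)) (f (\<Gamma>' x y s))"
    and P_g: "\<And>x y s. x \<in> K \<Longrightarrow> y \<in> K \<Longrightarrow> s \<in> {0..1} \<Longrightarrow> P (g (\<Gamma> x y s)) (g (\<Gamma>' x y s))"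
    and P_bridge: "\<And>s. s \<in> {0..1} \<Longrightarrow> P (linepath p q s) (linepath p q s) \<and> P (linepath q p s) (linepath q p s)"
    and "a \<in> K" "b \<in> K" "t \<in> {0..1}"
  shows "P (refine \<Gamma> a b t) (refine \<Gamma>' a b t)"
proof -
  have pieces_f:
    "\<forall>s\<in>{0..1}. P ((f \<circ> \<Gamma> (inv_into K f x) (inv_into K f y)) s)
       ((f \<circ> \<Gamma>' (inv_into K f x) (inv_into K f y)) s)"
    if "x \<in> f ` K" "y \<in> f ` K" for x y
    using P_f that by (simp add: inv_into_into)
  have pieces_g:
    "\<forall>s\<in>{0..1}. P ((g \<circ> \<Gamma> (inv_into K g x) (inv_into K g y)) s)
       ((g \<circ> \<Gamma>' (inv_into K g x) (inv_into K g y)) s)"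
    if "x \<in> g ` K" "y \<in> g ` K" for x y
    using P_g that by (simp add: inv_into_into)
  have bridges:
    "\<forall>s\<in>{0..1}. P (linepath p q s) (linepath p q s)" "\<forall>s\<in>{0..1}. P (linepath q p s) (linepath q p s)"
    using P_bridge by simp_all
  show ?thesis
    using assms(4,5) by (cases rule: refine_cases)
      (use pieces_f pieces_g bridges p_in_f_image q_in_g_image assms(6)
        in \<open>simp_all add: joinpaths_pointwise\<close>)
qed

lemma refine_dist_le:
  assumes "\<And>x y s. x \<in> K \<Longrightarrow> y \<in> K \<Longrightarrow> s \<in> {0..1} \<Longrightarrow> dist (\<Gamma> x y s) (\<Gamma>' x y s) \<le> e"
    and "0 \<le> e" "a \<in> K" "b \<in> K" "t \<in> {0..1}"
  shows "dist (refine \<Gamma> a b t) (refine \<Gamma>' a b t) \<le> r * e"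
proof (rule refine_pointwise[where P = "\<lambda>u v. dist u v \<le> r * e"])
  show "dist (f (\<Gamma> x y s)) (f (\<Gamma>' x y s)) \<le> r * e" "dist (g (\<Gamma> x y s)) (g (\<Gamma>' x y s)) \<le> r * e"
    if "x \<in> K" "y \<in> K" "s \<in> {0..1}" for x y s
    using dist_f_le dist_g_le mult_left_mono[OF assms(1)[OF that] contraction_factor_nonneg] order_trans
    by blast+
qed (use assms contraction_factor_nonneg in auto)

lemma refine_infdist_le:
  assumes "\<And>x y s. x \<in> K \<Longrightarrow> y \<in> K \<Longrightarrow> s \<in> {0..1} \<Longrightarrow> infdist (\<Gamma> x y s) K \<le> e"
    and "a \<in> K" "b \<in> K" "t \<in> {0..1}"
  shows "infdist (refine \<Gamma> a b t) K \<le> max (r * e) (dist p q / 2)"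
proof (rule refine_pointwise[where P = "\<lambda>u _. infdist u K \<le> max (r * e) (dist p q / 2)" and \<Gamma>' = \<Gamma>])
  show "infdist (f (\<Gamma> x y s)) K \<le> max (r * e) (dist p q / 2)"
    "infdist (g (\<Gamma> x y s)) K \<le> max (r * e) (dist p q / 2)"
    if "x \<in> K" "y \<in> K" "s \<in> {0..1}" for x y s
    using infdist_f_le infdist_g_le mult_left_mono[OF assms(1)[OF that] contraction_factor_nonneg]
    by (smt (verit))+
  have "p \<in> K" "q \<in> K" using p_in_f_image q_in_g_image K_invariant by blast+
  then show "infdist (linepath p q s) K \<le> max (r * e) (dist p q / 2) \<and>
      infdist (linepath q p s) K \<le> max (r * e) (dist p q / 2)" if "s \<in> {0..1}" for s
    using infdist_linepath_le[OF _ _ that, of _ K] by (smt (verit) dist_commute)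
qed (use assms in auto)

definition approx_path :: "nat \<Rightarrow> 'a \<Rightarrow> 'a \<Rightarrow> real \<Rightarrow> 'a" where
  "approx_path n = (refine ^^ n) linepath"

lemma approx_path_0: "approx_path 0 = linepath"
  by (simp add: approx_path_def)

lemma approx_path_Suc: "approx_path (Suc n) = refine (approx_path n)"
  by (simp add: approx_path_def)

lemma approx_path_endpoints:
  assumes "a \<in> K" "b \<in> K"
  shows "path (approx_path n a b) \<and> pathstart (approx_path n a b) = a \<and> pathfinish (approx_path n a b) = b"
  using assms
proof (induction n arbitrary: a b)
  case 0
  then show ?case by (simp add: approx_path_0)
next
  case (Suc n)
  then show ?case unfolding approx_path_Suc by (intro refine_path)
qed

lemma approx_path_infdist_le:
  assumes "a \<in> K" "b \<in> K" "t \<in> {0..1}"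
  shows "infdist (approx_path n a b t) K \<le> dist p q / 2 + r ^ n * diameter K"
  using assms
proof (induction n arbitrary: a b t)
  case 0
  have "dist a b \<le> diameter K"
    using diameter_bounded_bound[OF compact_imp_bounded[OF compact_K] 0(1,2)] .
  then show ?case
    using infdist_linepath_le[OF 0] zero_le_dist[of p q] zero_le_dist[of a b]
    unfolding approx_path_0 power_0 mult_1 by linarith
next
  case (Suc n)
  have "infdist (approx_path (Suc n) a b t) K \<le> max (r * (dist p q / 2 + r ^ n * diameter K)) (dist p q / 2)"
    unfolding approx_path_Suc using Suc by (intro refine_infdist_le)
  also have "\<dots> \<le> dist p q / 2 + r ^ Suc n * diameter K"
    using contraction_factor_nonneg contraction_factor_less_1 diameter_ge_0[OF compact_imp_bounded[OF compact_K]]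
    by (auto simp: algebra_simps intro: mult_left_le_one_le order_trans[of _ "dist p q / 2"])
  finally show ?case .
qed


lemma approx_path_dist_Suc_le:
  assumes "a \<in> K" "b \<in> K" "t \<in> {0..1}"
  shows "dist (approx_path (Suc n) a b t) (approx_path n a b t) \<le> r ^ n * (dist p q + 3 * diameter K)"
  using assms
proof (induction n arbitrary: a b t)
  case 0
  have "dist (approx_path 1 a b t) (approx_path 0 a b t)
      \<le> infdist (approx_path 1 a b t) K + diameter K + infdist (approx_path 0 a b t) K"
    by (rule dist_le_infdist_diameter[OF compact_K K_nonempty])
  also have "\<dots> \<le> (dist p q / 2 + r * diameter K) + diameter K + (dist p q / 2 + diameter K)"
    using approx_path_infdist_le[OF 0, of 1] approx_path_infdist_le[OF 0, of 0] by simp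
  also have "\<dots> \<le> dist p q + 3 * diameter K"
    using contraction_factor_nonneg contraction_factor_less_1 diameter_ge_0[OF compact_imp_bounded[OF compact_K]]
    by (simp add: mult_left_le_one_le)
  finally show ?case by simp
next
  case (Suc n)
  have "0 \<le> r ^ n * (dist p q + 3 * diameter K)"
    using contraction_factor_nonneg diameter_ge_0[OF compact_imp_bounded[OF compact_K]] by simp
  then have "dist (refine (approx_path (Suc n)) a b t) (refine (approx_path n) a b t)
      \<le> r * (r ^ n * (dist p q + 3 * diameter K))"
    using Suc by (intro refine_dist_le)
  then show ?case by (simp only: approx_path_Suc[symmetric] power_Suc mult.assoc)
qed

lemma path_component_nbhd:
  assumes "a \<in> K" "b \<in> K"
  shows "path_component {x. infdist x K \<le> dist p q / 2} a b"
proof -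
  obtain \<gamma> where \<gamma>: "uniform_limit {0..1} (\<lambda>n. approx_path n a b) \<gamma> sequentially"
  proof -
    have "summable (\<lambda>n. r ^ n * (dist p q + 3 * diameter K))"
      using contraction_factor_nonneg contraction_factor_less_1 by (intro summable_mult2 summable_geometric) simp
    then show ?thesis
      using uniform_limit_summable_dist_Suc[of "{0..1}" "\<lambda>n. approx_path n a b", OF approx_path_dist_Suc_le[OF assms]]
        that by blast
  qed
  have approx_path: "path (approx_path n a b) \<and> approx_path n a b 0 = a \<and> approx_path n a b 1 = b" for n
    using approx_path_endpoints[OF assms] by (simp add: pathstart_def pathfinish_def)
  have "path \<gamma>"
    unfolding path_def by (rule uniform_limit_theorem[OF _ \<gamma>]) (use approx_path in \<open>simp_all add: path_def\<close>)
  have pointwise: "(\<lambda>n. approx_path n a b t) \<longlonglongrightarrow> \<gamma> t" if "t \<in> {0..1}" for t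
    by (rule tendsto_uniform_limitI[OF \<gamma> that])
  have "\<gamma> 0 = a" "\<gamma> 1 = b"
    using pointwise[of 0] pointwise[of 1] approx_path by (simp_all add: LIMSEQ_const_iff)
  moreover have "infdist (\<gamma> t) K \<le> dist p q / 2" if "t \<in> {0..1}" for t
  proof (rule tendsto_le[OF sequentially_bot])
    show "(\<lambda>n. infdist (approx_path n a b t) K) \<longlonglongrightarrow> infdist (\<gamma> t) K"
      by (intro tendsto_infdist pointwise that)
    show "(\<lambda>n. dist p q / 2 + r ^ n * diameter K) \<longlonglongrightarrow> dist p q / 2"
      using contraction_factor_nonneg contraction_factor_less_1
      by (auto intro!: tendsto_eq_intros LIMSEQ_power_zero)
    show "\<forall>\<^sub>F n in sequentially. infdist (approx_path n a b t) K \<le> dist p q / 2 + r ^ n * diameter K"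
      using approx_path_infdist_le[OF assms that] by simp
  qed
  ultimately show ?thesis
    using \<open>path \<gamma>\<close> unfolding path_component_def path_image_def pathstart_def pathfinish_def by auto
qed

theorem path_connected_nbhd: "path_connected {x. infdist x K \<le> dist p q / 2}"
  using closed_K K_nonempty path_component_nbhd by (rule path_connected_infdist_le)

end

lemma dist_ifs_f: "dist (ifs_f z x) (ifs_f z y) = norm z * dist x y"
  by (simp add: ifs_f_def dist_norm norm_mult[symmetric] right_diff_distrib)

lemma dist_ifs_g: "dist (ifs_g z x) (ifs_g z y) = norm z * dist x y"
  by (simp add: ifs_g_def dist_norm norm_mult[symmetric] right_diff_distrib)

lemma contraction_pair_ifs: "norm z < 1 \<Longrightarrow> contraction_pair (ifs_f z) (ifs_g z) (norm z)"
  by unfold_locales (auto intro!: lipschitz_onI simp: dist_ifs_f dist_ifs_g)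

lemma Lambda_attractor:
  assumes "z \<noteq> 0" "norm z < 1"
  shows "Lambda z \<noteq> {} \<and> compact (Lambda z) \<and> Lambda z = ifs_f z ` Lambda z \<union> ifs_g z ` Lambda z"
proof -
  interpret contraction_pair "ifs_f z" "ifs_g z" "norm z"
    using assms(2) by (rule contraction_pair_ifs)
  have "inj (ifs_f z)" "inj (ifs_g z)"
    using assms(1) by (simp_all add: inj_def ifs_f_def ifs_g_def)
  then obtain K where K: "K \<noteq> {}" "compact K" "K = ifs_f z ` K \<union> ifs_g z ` K"
    using invariant_compact_exists by blast
  show ?thesis
    unfolding Lambda_def
  proof (rule theI)
    show "K \<noteq> {} \<and> compact K \<and> K = ifs_f z ` K \<union> ifs_g z ` K" using K by blast
  qed (use K invariant_compact_unique in metis)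
qed

theorem lemma5p2p2:
  fixes z p q :: complex and \<delta> :: real
  assumes "0 < norm z" and "norm z < 1"
    and "p \<in> ifs_f z ` Lambda z" and "q \<in> ifs_g z ` Lambda z"
    and "norm (p - q) = \<delta>"
  shows "path_connected {x :: complex. infdist x (Lambda z) \<le> \<delta> / 2}"
proof -
  have "z \<noteq> 0" using assms(1) by auto
  interpret bridged_attractor "ifs_f z" "ifs_g z" "norm z" "Lambda z" p q
    using contraction_pair_ifs[OF assms(2)] Lambda_attractor[OF \<open>z \<noteq> 0\<close> assms(2)] assms(3,4)
    by (simp add: bridged_attractor_def bridged_attractor_axioms_def)
  show ?thesis
    using path_connected_nbhd assms(5) by (simp add: dist_norm)
qed

end
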